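(* For complex parameters $a,c$, \begin{align*} \sum_{n=0}^\infty \sum_{j=-n}^n (-1)^j \bigl(1-q^{4n+2}\bigr)q^{j^2-2n}\frac{\bigl(q^2/a, q^2/c; q^2\bigr)_n (ac)^n}{\bigl(q^2a, q^2c; q^2\bigr)_n} =\frac{\bigl(q^2, ac; q^2\bigr)_\infty}{\bigl(q^2a, q^2c; q^2\bigr)_\infty}\sum_{n=0}^\infty \frac{\bigl(q^2/a, q^2/c, q; q^2\bigr)_n}{(-q; q)_{2n} \bigl(q^2; q^2\bigr)_n}\biggl(\frac{ac}{q^2}\biggr)^n. \end{align*}
   Context: Throughout, $q$ is a complex number with $0<|q|<1$. For $x\in\mathbb{C}$ and base $p\in\{q,q^2\}$, $(x;p)_\infty=\prod_{k=0}^\infty(1-xp^k)$ and, for an integer $n\ge 0$, $(x;p)_n=\prod_{k=0}^{n-1}(1-xp^k)$; also $(x_1,\dots,x_m;p)_n=(x_1;p)_n\cdots(x_m;p)_n$ for $n$ an integer or $\infty$. *)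

theory Defs
  imports "HOL-Analysis.Analysis"
begin

definition qpoch :: "complex \<Rightarrow> complex \<Rightarrow> nat \<Rightarrow> complex" where
  "qpoch x p n = (\<Prod>k<n. 1 - x * p ^ k)"

definition qpoch_inf :: "complex \<Rightarrow> complex \<Rightarrow> complex" where
  "qpoch_inf x p = (\<Prod>k. 1 - x * p ^ k)"

end

theory Submission
  imports Defs
begin

text \<open>
  Put \<open>p = q\<^sup>2\<close>, \<open>y = ac/p\<close>, and write the partial theta sums as
  \<open>\<Sum>\<^bsub>|j| \<le> n\<^esub> (-1)\<^sup>j q\<^bsup>j\<^sup>2\<^esup> = \<Sum>\<^bsub>m \<le> n\<^esub> \<theta>\<^sub>m\<close>.
  Both sides equal \<open>\<Sum>\<^sub>m \<theta>\<^sub>m D\<^sub>m\<close>, where \<open>D\<^sub>m\<close> is the closed form of the tail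
  \<open>\<Sum>\<^bsub>n \<ge> m\<^esub> (1 - p\<^bsup>2n+1\<^esup>) (p/a, p/c; p)\<^sub>n / (pa, pc; p)\<^sub>n y\<^sup>n\<close>.
  On the left this is summation by parts.
  On the right, \<open>(q;q\<^sup>2)\<^sub>n / ((-q;q)\<^sub>2\<^sub>n (q\<^sup>2;q\<^sup>2)\<^sub>n) = \<Sum>\<^bsub>m \<le> n\<^esub> \<theta>\<^sub>m / ((p;p)\<^bsub>n-m\<^esub> (p;p)\<^bsub>n+m\<^esub>)\<close>
  is a Bailey pair coming from the \<open>q\<close>-binomial theorem. After interchanging the two summations,
  the inner series is a \<open>\<^sub>2\<phi>\<^sub>1\<close> evaluated by the \<open>q\<close>-Gauss sum and Euler's identity, and its
  infinite products combine with the prefactor to give exactly \<open>D\<^sub>m\<close>.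
\<close>

section \<open>\<open>q\<close>-Pochhammer symbols\<close>

lemma qpoch_0 [simp]: "qpoch x p 0 = 1"
  by (simp add: qpoch_def)

lemma qpoch_Suc: "qpoch x p (Suc n) = qpoch x p n * (1 - x * p ^ n)"
  by (simp add: qpoch_def)

lemma qpoch_add: "qpoch x p (m + n) = qpoch x p m * qpoch (x * p ^ m) p n"
  by (induction n) (simp_all add: qpoch_Suc power_add mult_ac)

lemma qpoch_Suc_left: "qpoch x p (Suc n) = (1 - x) * qpoch (x * p) p n"
  using qpoch_add[of x p 1 n] by (simp add: qpoch_def)

lemma qpoch_nonzero_factor:
  assumes "\<And>n. qpoch x p n \<noteq> 0"
  shows "1 - x * p ^ k \<noteq> 0"
  using assms[of "Suc k"] by (simp add: qpoch_Suc)

lemma one_minus_power_nonzero: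
  fixes p :: complex
  assumes "norm p < 1" "n > 0"
  shows "1 - p ^ n \<noteq> 0"
proof
  assume "1 - p ^ n = 0"
  then have "p ^ n = 1" by simp
  then have "norm p ^ n = 1" by (metis norm_one norm_power)
  moreover have "norm p ^ n < 1" using assms by (simp add: power_less_one_iff)
  ultimately show False by simp
qed

lemma qpoch_self_nonzero:
  assumes "norm p < 1"
  shows "qpoch p p n \<noteq> 0"
  using one_minus_power_nonzero[OF assms, of "Suc _"] by (simp add: qpoch_def)

lemma norm_qpoch_le:
  assumes "norm p < 1" "norm x \<le> R"
  shows "norm (qpoch x p n) \<le> exp (R / (1 - norm p))"
proof -
  have "R \<ge> 0" using assms(2) norm_ge_zero order.trans by blast
  have "norm (qpoch x p n) \<le> (\<Prod>k<n. 1 + norm x * norm p ^ k)"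
    unfolding qpoch_def prod_norm[symmetric]
    by (intro prod_mono conjI order.trans[OF norm_triangle_ineq4])
       (simp_all add: norm_mult norm_power)
  also have "\<dots> \<le> exp (\<Sum>k<n. norm x * norm p ^ k)"
    by (rule prod_le_exp_sum) simp
  also have "(\<Sum>k<n. norm x * norm p ^ k) \<le> (\<Sum>k. R * norm p ^ k)"
    using assms \<open>R \<ge> 0\<close>
    by (intro order.trans[OF sum_mono sum_le_suminf] summable_mult summable_geometric mult_right_mono)
       auto
  also have "(\<Sum>k. R * norm p ^ k) = R / (1 - norm p)"
    using assms by (simp add: suminf_mult suminf_geometric)
  finally show ?thesis by simp
qed

lemma convergent_prod_qpoch:
  fixes x p :: complex
  assumes "norm p < 1"
  shows "convergent_prod (\<lambda>k. 1 - x * p ^ k)"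
proof -
  have "summable (\<lambda>k. norm x * norm p ^ k)"
    using assms by (intro summable_mult summable_geometric) simp
  also have "(\<lambda>k. norm x * norm p ^ k) = (\<lambda>k. norm ((1 - x * p ^ k) - 1))"
    by (simp add: norm_mult norm_power)
  finally show ?thesis
    by (intro abs_convergent_prod_imp_convergent_prod summable_imp_abs_convergent_prod)
qed

lemma qpoch_LIMSEQ:
  assumes "norm p < 1"
  shows "(\<lambda>n. qpoch x p n) \<longlonglongrightarrow> qpoch_inf x p"
  unfolding qpoch_def qpoch_inf_def
  by (intro has_prod_imp_tendsto' convergent_prod_has_prod convergent_prod_qpoch assms)

lemma qpoch_inf_nonzero:
  assumes "norm p < 1" "\<And>k. 1 - x * p ^ k \<noteq> 0"
  shows "qpoch_inf x p \<noteq> 0"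
  unfolding qpoch_inf_def by (intro prodinf_nonzero convergent_prod_qpoch assms)

lemma qpoch_inf_nonzero_if_norm_less:
  fixes x p :: complex
  assumes p1: "norm p < 1" and x1: "norm x < 1"
  shows "qpoch_inf x p \<noteq> 0"
proof (rule qpoch_inf_nonzero[OF p1])
  fix k
  have "norm (x * p ^ k) \<le> norm x"
    unfolding norm_mult norm_power using p1 by (intro mult_left_le power_le_one) auto
  with x1 have "x * p ^ k \<noteq> 1" by auto
  then show "1 - x * p ^ k \<noteq> 0" by simp
qed

lemma qpoch_inf_split:
  assumes "norm p < 1"
  shows "qpoch_inf x p = qpoch x p m * qpoch_inf (x * p ^ m) p"
proof (rule LIMSEQ_unique)
  show "(\<lambda>n. qpoch x p (m + n)) \<longlonglongrightarrow> qpoch_inf x p"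
    using LIMSEQ_ignore_initial_segment[OF qpoch_LIMSEQ[OF assms], of x m]
    by (simp add: add.commute)
  show "(\<lambda>n. qpoch x p (m + n)) \<longlonglongrightarrow> qpoch x p m * qpoch_inf (x * p ^ m) p"
    unfolding qpoch_add by (intro tendsto_mult tendsto_const qpoch_LIMSEQ assms)
qed

lemma qpoch_inf_Suc_left:
  assumes "norm p < 1"
  shows "qpoch_inf x p = (1 - x) * qpoch_inf (x * p) p"
  using qpoch_inf_split[OF assms, of x 1] by (simp add: qpoch_def)

lemma qpoch_norm_bounded_below:
  assumes "norm p < 1" "\<And>n. qpoch x p n \<noteq> 0"
  obtains d where "d > 0" "\<And>n. d \<le> norm (qpoch x p n)"
proof -
  define l where "l = norm (qpoch_inf x p)"
  have "qpoch_inf x p \<noteq> 0"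
    by (intro qpoch_inf_nonzero assms(1) qpoch_nonzero_factor assms(2))
  then have "l > 0" by (simp add: l_def)
  have "(\<lambda>n. norm (qpoch x p n)) \<longlonglongrightarrow> l"
    unfolding l_def by (intro tendsto_norm qpoch_LIMSEQ assms)
  then have "eventually (\<lambda>n. norm (qpoch x p n) > l / 2) sequentially"
    using \<open>l > 0\<close> by (intro order_tendstoD) auto
  then obtain N where N: "\<And>n. n \<ge> N \<Longrightarrow> norm (qpoch x p n) > l / 2"
    by (auto simp: eventually_sequentially)
  define d where "d = Min (insert (l/2) ((\<lambda>n. norm (qpoch x p n)) ` {..<N}))"
  have "d > 0"
    unfolding d_def using \<open>l > 0\<close> assms(2) by (subst Min_gr_iff) auto
  moreover have "d \<le> norm (qpoch x p n)" for n
  proof (cases "n < N")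
    case True
    then show ?thesis unfolding d_def by (intro Min_le) auto
  next
    case False
    have "d \<le> l/2" unfolding d_def by (intro Min_le) auto
    with N[of n] False show ?thesis by simp
  qed
  ultimately show ?thesis by (rule that)
qed

lemma tendsto_qpoch:
  assumes "X \<longlonglongrightarrow> x"
  shows "(\<lambda>n. qpoch (X n) p k) \<longlonglongrightarrow> qpoch x p k"
  unfolding qpoch_def by (intro tendsto_prod tendsto_intros assms)

lemma summable_if_geometric_bound:
  fixes f :: "nat \<Rightarrow> 'a::banach"
  assumes "norm r < 1" "\<And>k. norm (f k) \<le> C * norm r ^ k"
  shows "summable f"
proof (rule summable_comparison_test')
  show "summable (\<lambda>k. C * norm r ^ k)"
    using assms(1) by (intro summable_mult summable_geometric) simp
qed (use assms(2) in simp)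

section \<open>Euler's identity\<close>

definition qexp :: "complex \<Rightarrow> complex \<Rightarrow> complex" where
  "qexp p y = (\<Sum>k. y ^ k / qpoch p p k)"

lemma qexp_term_bound:
  assumes "norm p < 1"
  obtains C where "C \<ge> 0" "\<And>k. norm (y ^ k / qpoch p p k) \<le> C * norm y ^ k"
proof -
  obtain d where d: "d > 0" "\<And>n. d \<le> norm (qpoch p p n)"
    using qpoch_norm_bounded_below[OF assms qpoch_self_nonzero[OF assms]] by blast
  have "norm (y ^ k / qpoch p p k) \<le> 1 / d * norm y ^ k" for k
  proof -
    have "norm y ^ k / norm (qpoch p p k) \<le> norm y ^ k / d"
      using d order.strict_trans2[OF d(1) d(2)[of k]] by (intro divide_left_mono) auto
    then show ?thesis by (simp add: norm_divide norm_power)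
  qed
  then show ?thesis using d(1) by (intro that[of "1/d"]) auto
qed

lemma summable_qexp:
  assumes "norm p < 1" "norm y < 1"
  shows "summable (\<lambda>k. y ^ k / qpoch p p k)"
proof -
  obtain C where "\<And>k. norm (y ^ k / qpoch p p k) \<le> C * norm y ^ k"
    using qexp_term_bound[OF assms(1)] by blast
  then show ?thesis by (rule summable_if_geometric_bound[OF assms(2)])
qed

lemma qexp_shift:
  assumes p: "norm p < 1" and y: "norm y < 1"
  shows "qexp p y * (1 - y) = qexp p (p * y)"
proof -
  have "norm (p * y) \<le> 1 * norm y"
    unfolding norm_mult using p by (intro mult_right_mono) auto
  with y have py: "norm (p * y) < 1" by simp
  define f where "f k = y ^ k / qpoch p p k - (p * y) ^ k / qpoch p p k" for k
  have "f sums (qexp p y - qexp p (p * y))"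
    unfolding f_def qexp_def using summable_qexp[OF p y] summable_qexp[OF p py]
    by (intro sums_diff summable_sums)
  moreover have "f sums (y * qexp p y)"
  proof -
    have "f (Suc j) = y * (y ^ j / qpoch p p j)" for j
    proof -
      have "y ^ Suc j - (p * y) ^ Suc j = (y * y ^ j) * (1 - p * p ^ j)"
        by (simp add: power_mult_distrib algebra_simps)
      moreover have "1 - p * p ^ j \<noteq> 0"
        using qpoch_self_nonzero[OF p, of "Suc j"] by (simp add: qpoch_Suc)
      ultimately show ?thesis
        by (simp add: f_def qpoch_Suc diff_divide_distrib[symmetric])
    qed
    moreover have "(\<lambda>j. y * (y ^ j / qpoch p p j)) sums (y * qexp p y)"
      unfolding qexp_def using summable_qexp[OF p y] by (intro sums_mult summable_sums)
    ultimately have "(\<lambda>j. f (Suc j)) sums (y * qexp p y)" by simp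
    moreover have "f 0 = 0" by (simp add: f_def)
    ultimately show ?thesis using sums_Suc_iff[of f] by simp
  qed
  ultimately have "qexp p y - qexp p (p * y) = y * qexp p y" by (rule sums_unique2)
  then show ?thesis by (simp add: algebra_simps)
qed

lemma qexp_LIMSEQ_1:
  assumes p: "norm p < 1" and y: "norm y < 1"
  shows "(\<lambda>N. qexp p (p ^ N * y)) \<longlonglongrightarrow> 1"
proof -
  obtain C where C: "C \<ge> 0" "\<And>k. norm (y ^ k / qpoch p p k) \<le> C * norm y ^ k"
    using qexp_term_bound[OF p, of y] by blast
  define e :: "nat \<Rightarrow> complex" where "e k = (if k = 0 then 1 else 0)" for k
  have "(\<lambda>N. \<Sum>k. (p ^ N * y) ^ k / qpoch p p k) \<longlonglongrightarrow> (\<Sum>k. e k)"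
  proof (rule tannerys_theorem[where M = "\<lambda>k. C * norm y ^ k", THEN conjunct2, THEN conjunct2])
    show "(\<lambda>N. (p ^ N * y) ^ k / qpoch p p k) \<longlonglongrightarrow> e k" for k
    proof (cases "k = 0")
      case False
      have "(\<lambda>N. (p ^ N * y) ^ k / qpoch p p k) \<longlonglongrightarrow> (0 * y) ^ k / qpoch p p k"
        using p qpoch_self_nonzero[OF p, of k] by (intro tendsto_intros LIMSEQ_power_zero) auto
      with False show ?thesis by (simp add: e_def zero_power)
    qed (simp add: e_def)
    have "norm ((p ^ N * y) ^ k / qpoch p p k) \<le> C * norm y ^ k" for k N
    proof -
      have "norm ((p ^ N * y) ^ k / qpoch p p k) = (norm p ^ N) ^ k * norm (y ^ k / qpoch p p k)"
        by (simp add: norm_mult norm_divide norm_power power_mult_distrib)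
      also have "\<dots> \<le> 1 * (C * norm y ^ k)"
        using p C by (intro mult_mono power_le_one) auto
      finally show ?thesis by simp
    qed
    then show "\<forall>\<^sub>F (k, N) in sequentially \<times>\<^sub>F sequentially.
        norm ((p ^ N * y) ^ k / qpoch p p k) \<le> C * norm y ^ k"
      by (intro always_eventually) auto
    show "summable (\<lambda>k. C * norm y ^ k)"
      using y by (intro summable_mult summable_geometric) simp
  qed simp
  moreover have "(\<Sum>k. e k) = 1"
    using sums_single[of 0 "\<lambda>_. 1::complex"] by (simp add: e_def sums_iff)
  ultimately show ?thesis by (simp add: qexp_def)
qed

text \<open>Iterating \<open>qexp_shift\<close> gives \<open>qexp p y * (y;p)\<^sub>N = qexp p (p\<^sup>N y)\<close>, which tends to \<open>1\<close>.\<close>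
lemma qexp_mult_qpoch_inf:
  assumes p: "norm p < 1" and y: "norm y < 1"
  shows "qexp p y * qpoch_inf y p = 1"
proof (rule LIMSEQ_unique)
  have small: "norm (p ^ N * y) < 1" for N
  proof -
    have "norm (p ^ N * y) \<le> 1 * norm y"
      unfolding norm_mult norm_power using p by (intro mult_right_mono power_le_one) auto
    with y show ?thesis by simp
  qed
  have "qexp p y * qpoch y p N = qexp p (p ^ N * y)" for N
  proof (induction N)
    case (Suc N)
    have "qexp p y * qpoch y p (Suc N) = qexp p (p ^ N * y) * (1 - p ^ N * y)"
      using Suc by (simp add: qpoch_Suc mult_ac)
    also have "\<dots> = qexp p (p ^ Suc N * y)"
      using qexp_shift[OF p small] by (simp add: mult_ac)
    finally show ?case .
  qed simp
  then show "(\<lambda>N. qexp p y * qpoch y p N) \<longlonglongrightarrow> 1"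
    using qexp_LIMSEQ_1[OF p y] by simp
  show "(\<lambda>N. qexp p y * qpoch y p N) \<longlonglongrightarrow> qexp p y * qpoch_inf y p"
    by (intro tendsto_mult tendsto_const qpoch_LIMSEQ p)
qed

section \<open>The \<open>q\<close>-Gauss sum\<close>

text \<open>\<open>gauss_sum p a c m\<close> is \<open>\<^sub>2\<phi>\<^sub>1(p\<^bsup>m+1\<^esup>/a, p\<^bsup>m+1\<^esup>/c; p\<^bsup>2m+1\<^esup>; p, ac/p) / (p;p)\<^bsub>2m\<^esub>\<close>.
  It is evaluated through its first-order recurrence in \<open>m\<close>, found by creative telescoping:
  \<open>gauss_telescoper\<close> is the closed form of the partial sums of the difference of consecutive rows.\<close>

definition gauss_term :: "complex \<Rightarrow> complex \<Rightarrow> complex \<Rightarrow> nat \<Rightarrow> nat \<Rightarrow> complex" where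
  "gauss_term p a c m k = qpoch (p ^ (m+1) / a) p k * qpoch (p ^ (m+1) / c) p k * (a*c/p) ^ k
      / (qpoch p p k * qpoch p p (k + 2*m))"

definition gauss_sum :: "complex \<Rightarrow> complex \<Rightarrow> complex \<Rightarrow> nat \<Rightarrow> complex" where
  "gauss_sum p a c m = (\<Sum>k. gauss_term p a c m k)"

definition gauss_telescoper :: "complex \<Rightarrow> complex \<Rightarrow> complex \<Rightarrow> nat \<Rightarrow> nat \<Rightarrow> complex" where
  "gauss_telescoper p a c m K = gauss_term p a c (Suc m) K * p ^ m *
      (a + c - p ^ m * (a*c + p) - p ^ m * p ^ (K+2) * (1 - p * (p ^ m)\<^sup>2))"

lemma gauss_telescope_base_identity:
  fixes p a c u Q :: complex
  assumes "Q \<noteq> 0" "1 - p*u\<^sup>2 \<noteq> 0" "1 - p\<^sup>2*u\<^sup>2 \<noteq> 0"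
  shows "1/Q - (1 - a*u)*(1 - c*u) * (1 / (Q * (1 - p*u\<^sup>2) * (1 - p\<^sup>2*u\<^sup>2)))
    = 1 / (Q * (1 - p*u\<^sup>2) * (1 - p\<^sup>2*u\<^sup>2)) * u * (a + c - u*(a*c+p) - u*p\<^sup>2*(1 - p*u\<^sup>2))"
proof -
  have "(1 - p*u\<^sup>2) * (1 - p\<^sup>2*u\<^sup>2) - (1 - a*u)*(1 - c*u)
      = u * (a + c - u*(a*c+p) - u*p\<^sup>2*(1 - p*u\<^sup>2))"
    by (simp add: algebra_simps power2_eq_square)
  with assms show ?thesis by (simp add: divide_simps)
qed

lemma gauss_telescope_step_identity:
  fixes p a c u x d1 d2 d3 :: complex
  assumes nz: "p \<noteq> 0" "d1 \<noteq> 0" "d2 \<noteq> 0" "d3 \<noteq> 0"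
    and d: "d1 = 1 - p*x" "d2 = 1 - p\<^sup>2*u\<^sup>2*x" "d3 = 1 - p^3*u\<^sup>2*x"
  shows "u * (a + c - u*(a*c+p) - u*p\<^sup>2*x*(1 - p*u\<^sup>2)) / d2
    + (a - p*u)*(c - p*u) / (p*d1)
    - (1 - a*u)*(1 - c*u) * ((a - p\<^sup>2*u*x)*(c - p\<^sup>2*u*x) / (p*d1*d2*d3))
   = (a - p\<^sup>2*u*x)*(c - p\<^sup>2*u*x) / (p*d1*d2*d3) * u * (a + c - u*(a*c+p) - u*p^3*x*(1 - p*u\<^sup>2))"
proof -
  have "u * (a + c - u*(a*c+p) - u*p\<^sup>2*x*(1 - p*u\<^sup>2)) * (p*d1*d3) + (a - p*u)*(c - p*u)*(d2*d3)
      - (1 - a*u)*(1 - c*u) * ((a - p\<^sup>2*u*x)*(c - p\<^sup>2*u*x))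
    = (a - p\<^sup>2*u*x)*(c - p\<^sup>2*u*x) * u * (a + c - u*(a*c+p) - u*p^3*x*(1 - p*u\<^sup>2))"
    unfolding d by (simp add: algebra_simps power2_eq_square power3_eq_cube)
  with nz show ?thesis by (simp add: divide_simps) (simp add: algebra_simps)
qed

lemma one_minus_div_mult_one_minus_div:
  fixes a c p z :: complex
  assumes "a \<noteq> 0" "c \<noteq> 0"
  shows "(1 - z/a) * (1 - z/c) * (a*c/p) = (a - z) * (c - z) / p"
proof -
  have "(1 - z/a) * (1 - z/c) * (a*c) = (a - z) * (c - z)"
    using assms by (simp add: field_simps)
  then show ?thesis by (metis times_divide_eq_right)
qed

lemma gauss_telescoper_0:
  assumes p1: "norm p < 1"
  shows "gauss_term p a c m 0 - (1 - a*p^m)*(1 - c*p^m) * gauss_term p a c (Suc m) 0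
    = gauss_telescoper p a c m 0"
proof -
  define u where "u = p ^ m"
  have "u\<^sup>2 = p ^ (2*m)"
    unfolding u_def by (simp add: power_mult[symmetric] mult.commute)
  then have u2: "p * u\<^sup>2 = p ^ Suc (2*m)" "p\<^sup>2 * u\<^sup>2 = p ^ Suc (Suc (2*m))"
    by (simp_all add: power2_eq_square)
  have "1 - p*u\<^sup>2 \<noteq> 0" "1 - p\<^sup>2*u\<^sup>2 \<noteq> 0"
    unfolding u2 by (simp_all only: one_minus_power_nonzero[OF p1] zero_less_Suc not_False_eq_True)
  moreover have "qpoch p p (2 * Suc m) = qpoch p p (2*m) * (1 - p*u\<^sup>2) * (1 - p\<^sup>2*u\<^sup>2)"
    by (simp add: qpoch_Suc u2 mult_ac)
  ultimately have "gauss_term p a c m 0 - (1 - a*u)*(1 - c*u) * gauss_term p a c (Suc m) 0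
      = gauss_term p a c (Suc m) 0 * u * (a + c - u*(a*c+p) - u*p\<^sup>2*(1 - p*u\<^sup>2))"
    using gauss_telescope_base_identity[OF qpoch_self_nonzero[OF p1]] by (simp add: gauss_term_def)
  then show ?thesis
    by (simp add: gauss_telescoper_def u_def power2_eq_square mult_ac)
qed

lemma gauss_term_contiguous:
  fixes p a c :: complex and m K :: nat
  assumes a0: "a \<noteq> 0" and c0: "c \<noteq> 0"
  defines "u \<equiv> p ^ m" and "x \<equiv> p ^ K"
    and "Z \<equiv> qpoch (p ^ (m+2) / a) p K * qpoch (p ^ (m+2) / c) p K * (a*c/p) ^ K
      / (qpoch p p K * qpoch p p (K + 2*m + 1))"
  shows "gauss_term p a c (Suc m) K = Z / (1 - p\<^sup>2*u\<^sup>2*x)"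
    and "gauss_term p a c m (Suc K) = Z * ((a - p*u) * (c - p*u) / (p * (1 - p*x)))"
    and "gauss_term p a c (Suc m) (Suc K) = Z * ((a - p\<^sup>2*u*x) * (c - p\<^sup>2*u*x)
      / (p * (1 - p*x) * (1 - p\<^sup>2*u\<^sup>2*x) * (1 - p^3*u\<^sup>2*x)))"
proof -
  have "p ^ (m*2) = p ^ m * p ^ m" by (simp add: mult_2_right power_add)
  then have "p * p ^ (K + 2*m + 1) = p\<^sup>2*u\<^sup>2*x" "p * p ^ Suc (K + 2*m + 1) = p^3*u\<^sup>2*x"
    by (simp_all add: x_def u_def power2_eq_square power3_eq_cube power_add mult_2 mult_ac)
  then have P: "qpoch p p (Suc K) = qpoch p p K * (1 - p*x)"
    "qpoch p p (K + 2 * Suc m) = qpoch p p (K + 2*m + 1) * (1 - p\<^sup>2*u\<^sup>2*x)"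
    "qpoch p p (Suc K + 2 * Suc m)
      = qpoch p p (K + 2*m + 1) * (1 - p\<^sup>2*u\<^sup>2*x) * (1 - p^3*u\<^sup>2*x)"
    "qpoch p p (Suc K + 2*m) = qpoch p p (K + 2*m + 1)"
    by (simp_all add: qpoch_Suc x_def)
  show "gauss_term p a c (Suc m) K = Z / (1 - p\<^sup>2*u\<^sup>2*x)"
    unfolding gauss_term_def Z_def P by (simp add: numeral_2_eq_2)
  have "gauss_term p a c m (Suc K) = (1 - p*u/a) * (1 - p*u/c) * (a*c/p) * Z / (1 - p*x)"
    unfolding gauss_term_def Z_def P(1,4) unfolding qpoch_Suc_left
    by (simp add: u_def power_add numeral_2_eq_2 mult_ac)
  then show "gauss_term p a c m (Suc K) = Z * ((a - p*u) * (c - p*u) / (p * (1 - p*x)))"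
    unfolding one_minus_div_mult_one_minus_div[OF a0 c0] by simp
  have "gauss_term p a c (Suc m) (Suc K) = (1 - p\<^sup>2*u*x/a) * (1 - p\<^sup>2*u*x/c) * (a*c/p) * Z
      / ((1 - p*x) * (1 - p\<^sup>2*u\<^sup>2*x) * (1 - p^3*u\<^sup>2*x))"
    unfolding gauss_term_def Z_def P(1,3) unfolding qpoch_Suc
    by (simp add: u_def x_def power_add numeral_2_eq_2 mult_ac)
  then show "gauss_term p a c (Suc m) (Suc K) = Z * ((a - p\<^sup>2*u*x) * (c - p\<^sup>2*u*x)
      / (p * (1 - p*x) * (1 - p\<^sup>2*u\<^sup>2*x) * (1 - p^3*u\<^sup>2*x)))"
    unfolding one_minus_div_mult_one_minus_div[OF a0 c0] by (simp add: mult_ac)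
qed

lemma gauss_telescoper_Suc:
  fixes p a c :: complex
  assumes p1: "norm p < 1" and p0: "p \<noteq> 0" and a0: "a \<noteq> 0" and c0: "c \<noteq> 0"
  shows "gauss_telescoper p a c m K
      + (gauss_term p a c m (Suc K) - (1 - a*p^m)*(1 - c*p^m) * gauss_term p a c (Suc m) (Suc K))
    = gauss_telescoper p a c m (Suc K)"
proof -
  define u where "u = p ^ m"
  define x where "x = p ^ K"
  define Z where "Z = qpoch (p ^ (m+2) / a) p K * qpoch (p ^ (m+2) / c) p K * (a*c/p) ^ K
      / (qpoch p p K * qpoch p p (K + 2*m + 1))"
  note T = gauss_term_contiguous[OF a0 c0, of p m K, folded u_def x_def Z_def]
  have "p ^ (m*2) = p ^ m * p ^ m" by (simp add: mult_2_right power_add)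
  then have "p*x = p ^ Suc K" "p\<^sup>2*u\<^sup>2*x = p ^ Suc (Suc (K + 2*m))"
    "p^3*u\<^sup>2*x = p ^ Suc (Suc (Suc (K + 2*m)))"
    by (simp_all add: u_def x_def power2_eq_square power3_eq_cube power_add mult_2 mult_ac)
  then have nz: "1 - p*x \<noteq> 0" "1 - p\<^sup>2*u\<^sup>2*x \<noteq> 0" "1 - p^3*u\<^sup>2*x \<noteq> 0"
    by (simp_all only: one_minus_power_nonzero[OF p1] zero_less_Suc not_False_eq_True)
  have W: "gauss_telescoper p a c m K
      = Z * (u * (a + c - u*(a*c+p) - u*p\<^sup>2*x*(1 - p*u\<^sup>2)) / (1 - p\<^sup>2*u\<^sup>2*x))"
    "gauss_telescoper p a c m (Suc K) = Z * ((a - p\<^sup>2*u*x) * (c - p\<^sup>2*u*x)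
        / (p * (1 - p*x) * (1 - p\<^sup>2*u\<^sup>2*x) * (1 - p^3*u\<^sup>2*x))
        * u * (a + c - u*(a*c+p) - u*p^3*x*(1 - p*u\<^sup>2)))"
    unfolding gauss_telescoper_def T
    by (simp_all add: u_def x_def power_add power2_eq_square power3_eq_cube mult_ac)
  have linear: "Z * U + (Z * A - L * (Z * R)) = Z * (U + A - L * R)" for U A L R :: complex
    by (simp add: algebra_simps)
  show ?thesis
    unfolding T W u_def[symmetric] linear
      gauss_telescope_step_identity[OF p0 nz refl refl refl] ..
qed

lemma gauss_term_telescope:
  fixes p a c :: complex
  assumes "norm p < 1" "p \<noteq> 0" "a \<noteq> 0" "c \<noteq> 0"
  shows "(\<Sum>k\<le>K. gauss_term p a c m k - (1 - a*p^m)*(1 - c*p^m) * gauss_term p a c (Suc m) k)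
    = gauss_telescoper p a c m K"
  by (induction K) (simp_all add: gauss_telescoper_0[OF assms(1)] gauss_telescoper_Suc[OF assms])

lemma norm_power_Suc_div_le:
  fixes p a :: complex
  assumes "norm p < 1"
  shows "norm (p ^ Suc m / a) \<le> norm (p / a)"
proof -
  have "norm (p ^ Suc m / a) = norm (p / a) * norm p ^ m"
    by (simp add: norm_divide norm_mult norm_power)
  also have "\<dots> \<le> norm (p / a) * 1"
    using assms by (intro mult_left_mono power_le_one) auto
  finally show ?thesis by simp
qed

lemma gauss_term_bound:
  assumes p1: "norm p < 1"
  obtains C where "C \<ge> 0" "\<And>m k. norm (gauss_term p a c m k) \<le> C * norm (a*c/p) ^ k"
proof -
  obtain d where d: "d > 0" "\<And>n. d \<le> norm (qpoch p p n)"
    using qpoch_norm_bounded_below[OF p1 qpoch_self_nonzero[OF p1]] by blast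
  define E where "E b = exp (norm (p/b) / (1 - norm p))" for b
  have "norm (gauss_term p a c m k) \<le> E a * E c / (d * d) * norm (a*c/p) ^ k" for m k
  proof -
    have "norm (gauss_term p a c m k) = norm (qpoch (p^(m+1)/a) p k) * norm (qpoch (p^(m+1)/c) p k)
        * norm (a*c/p) ^ k / (norm (qpoch p p k) * norm (qpoch p p (k + 2*m)))"
      by (simp add: gauss_term_def norm_mult norm_divide norm_power)
    also have "\<dots> \<le> E a * E c * norm (a*c/p) ^ k / (d * d)"
    proof (intro frac_le mult_mono mult_nonneg_nonneg)
      have E: "norm (qpoch (p^(m+1)/b) p k) \<le> E b" for b
        unfolding E_def using norm_power_Suc_div_le[OF p1, of m b] by (intro norm_qpoch_le p1) simp
      show "norm (qpoch (p^(m+1)/a) p k) \<le> E a" "norm (qpoch (p^(m+1)/c) p k) \<le> E c"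
        by (rule E)+
      show "d \<le> norm (qpoch p p k)" "d \<le> norm (qpoch p p (k + 2*m))" by (fact d(2))+
    qed (use d(1) in \<open>simp_all add: E_def\<close>)
    finally show ?thesis by simp
  qed
  then show ?thesis using d(1) by (intro that[of "E a * E c / (d * d)"]) (auto simp: E_def)
qed

lemma summable_gauss_term:
  assumes "norm p < 1" "norm (a*c/p) < 1"
  shows "summable (gauss_term p a c m)"
proof -
  obtain C where "C \<ge> 0" "\<And>m k. norm (gauss_term p a c m k) \<le> C * norm (a*c/p) ^ k"
    using gauss_term_bound[OF assms(1)] by blast
  then show ?thesis by (intro summable_if_geometric_bound[OF assms(2)])
qed

lemma gauss_sum_recurrence:
  assumes p1: "norm p < 1" and p0: "p \<noteq> 0" and a0: "a \<noteq> 0" and c0: "c \<noteq> 0"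
    and y1: "norm (a*c/p) < 1"
  shows "gauss_sum p a c m = (1 - a*p^m) * (1 - c*p^m) * gauss_sum p a c (Suc m)"
proof -
  define lam where "lam = (1 - a*p^m) * (1 - c*p^m)"
  define f where "f k = gauss_term p a c m k - lam * gauss_term p a c (Suc m) k" for k
  have "f sums (gauss_sum p a c m - lam * gauss_sum p a c (Suc m))"
    unfolding f_def gauss_sum_def using summable_gauss_term[OF p1 y1]
    by (intro sums_diff sums_mult summable_sums)
  moreover have "f sums 0"
  proof -
    have "(\<lambda>K. p ^ (K+2)) \<longlonglongrightarrow> 0"
      using LIMSEQ_ignore_initial_segment[OF LIMSEQ_power_zero[of p], of 2] p1 by simp
    moreover have "gauss_term p a c (Suc m) \<longlonglongrightarrow> 0"
      by (rule summable_LIMSEQ_zero[OF summable_gauss_term[OF p1 y1]])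
    ultimately have "gauss_telescoper p a c m \<longlonglongrightarrow>
        0 * p^m * (a + c - p^m * (a*c + p) - p^m * 0 * (1 - p * (p^m)\<^sup>2))"
      unfolding gauss_telescoper_def by (intro tendsto_intros)
    moreover have "(\<Sum>k\<le>K. f k) = gauss_telescoper p a c m K" for K
      unfolding f_def lam_def by (rule gauss_term_telescope[OF p1 p0 a0 c0])
    ultimately show ?thesis by (simp add: sums_def_le)
  qed
  ultimately have "gauss_sum p a c m - lam * gauss_sum p a c (Suc m) = 0"
    by (rule sums_unique2)
  then show ?thesis by (simp add: lam_def)
qed

lemma gauss_sum_LIMSEQ:
  assumes p1: "norm p < 1" and y1: "norm (a*c/p) < 1"
  shows "(\<lambda>m. gauss_sum p a c m) \<longlonglongrightarrow> qexp p (a*c/p) / qpoch_inf p p"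
proof -
  define y where "y = a*c/p"
  obtain C where C: "C \<ge> 0" "\<And>m k. norm (gauss_term p a c m k) \<le> C * norm (a*c/p) ^ k"
    using gauss_term_bound[OF p1] by blast
  have "(\<lambda>m. gauss_term p a c m k) \<longlonglongrightarrow> y ^ k / qpoch p p k / qpoch_inf p p" for k
  proof -
    have "(\<lambda>m. p ^ (m+1) / b) \<longlonglongrightarrow> 0" for b
      using LIMSEQ_ignore_initial_segment[OF LIMSEQ_power_zero[of p], of 1] p1
      by (auto intro!: tendsto_divide_zero)
    moreover have "(\<lambda>m. qpoch p p (k + 2*m)) \<longlonglongrightarrow> qpoch_inf p p"
      using LIMSEQ_subseq_LIMSEQ[OF qpoch_LIMSEQ[OF p1] strict_monoI[of "\<lambda>m. k + 2*m"]]
      by (simp add: o_def)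
    ultimately have "(\<lambda>m. gauss_term p a c m k)
        \<longlonglongrightarrow> qpoch 0 p k * qpoch 0 p k * y ^ k / (qpoch p p k * qpoch_inf p p)"
      unfolding gauss_term_def y_def
      using qpoch_self_nonzero[OF p1, of k] qpoch_inf_nonzero_if_norm_less[OF p1 p1]
      by (intro tendsto_intros tendsto_qpoch) auto
    then show ?thesis by (simp add: qpoch_def)
  qed
  then have "(\<lambda>m. \<Sum>k. gauss_term p a c m k) \<longlonglongrightarrow> (\<Sum>k. y ^ k / qpoch p p k / qpoch_inf p p)"
  proof (rule tannerys_theorem[where M = "\<lambda>k. C * norm y ^ k", THEN conjunct2, THEN conjunct2])
    show "\<forall>\<^sub>F (k, m) in sequentially \<times>\<^sub>F sequentially. norm (gauss_term p a c m k) \<le> C * norm y ^ k"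
      using C(2) unfolding y_def by (intro always_eventually) auto
    show "summable (\<lambda>k. C * norm y ^ k)"
      using y1 unfolding y_def by (intro summable_mult summable_geometric) simp
  qed simp
  also have "(\<Sum>k. y ^ k / qpoch p p k / qpoch_inf p p) = qexp p y / qpoch_inf p p"
    unfolding qexp_def using summable_qexp[OF p1 y1[folded y_def]] by (rule suminf_divide)
  finally show ?thesis unfolding gauss_sum_def y_def .
qed

lemma gauss_sum_iterate:
  assumes "norm p < 1" "p \<noteq> 0" "a \<noteq> 0" "c \<noteq> 0" "norm (a*c/p) < 1"
  shows "gauss_sum p a c m = qpoch (a*p^m) p L * qpoch (c*p^m) p L * gauss_sum p a c (m + L)"
proof (induction L)
  case (Suc L)
  then show ?case
    using gauss_sum_recurrence[OF assms, of "m + L"] by (simp add: qpoch_Suc power_add mult_ac)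
qed simp

lemma q_gauss_sum:
  assumes p1: "norm p < 1" and p0: "p \<noteq> 0" and a0: "a \<noteq> 0" and c0: "c \<noteq> 0"
    and y1: "norm (a*c/p) < 1"
  shows "gauss_sum p a c m
    = qpoch_inf (a*p^m) p * qpoch_inf (c*p^m) p / (qpoch_inf p p * qpoch_inf (a*c/p) p)"
proof -
  have "(\<lambda>L. qpoch (a*p^m) p L * qpoch (c*p^m) p L * gauss_sum p a c (m + L))
     \<longlonglongrightarrow> qpoch_inf (a*p^m) p * qpoch_inf (c*p^m) p * (qexp p (a*c/p) / qpoch_inf p p)"
    using LIMSEQ_ignore_initial_segment[OF gauss_sum_LIMSEQ[OF p1 y1], of m]
    by (intro tendsto_mult qpoch_LIMSEQ p1) (simp add: add.commute)
  then have "gauss_sum p a c m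
      = qpoch_inf (a*p^m) p * qpoch_inf (c*p^m) p * (qexp p (a*c/p) / qpoch_inf p p)"
    unfolding gauss_sum_iterate[OF assms, symmetric] by (rule LIMSEQ_const_iff[THEN iffD1])
  also have "qexp p (a*c/p) = 1 / qpoch_inf (a*c/p) p"
    using qexp_mult_qpoch_inf[OF p1 y1] by (auto simp: eq_divide_eq)
  finally show ?thesis by simp
qed

section \<open>A Bailey pair\<close>

lemma pascal_fraction_identity:
  fixes A B X Y :: "'a::field"
  assumes "A \<noteq> 0" "B \<noteq> 0" "1 - X \<noteq> 0" "1 - Y \<noteq> 0"
  shows "(1 - X*Y) / (A*(1 - X) * (B*(1 - Y))) = X / (A*(1 - X) * B) + 1 / (A * (B*(1 - Y)))"
proof -
  have "(1 - (1 - U)*(1 - V)) / (A*U * (B*V)) = (1 - U) / (A*U * B) + 1 / (A * (B*V))"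
    if "U \<noteq> 0" "V \<noteq> 0" for U V :: 'a
    using that assms(1,2) by (simp add: field_simps)
  from this[OF assms(3,4)] show ?thesis by simp
qed

text \<open>The conditionals stand for the vanishing coefficients at \<open>k = N + 1\<close> and \<open>k = -1\<close>, which
  truncated subtraction would otherwise turn into spurious terms.\<close>
lemma qbinomial_pascal:
  fixes p :: complex
  assumes p1: "norm p < 1" and k: "k \<le> Suc N"
  shows "(1 - p ^ Suc N) / (qpoch p p k * qpoch p p (Suc N - k))
    = (if k \<le> N then p ^ k / (qpoch p p k * qpoch p p (N - k)) else 0)
      + (if k = 0 then 0 else 1 / (qpoch p p (k - 1) * qpoch p p (N - (k - 1))))"
proof -
  have nz: "qpoch p p n \<noteq> 0" "1 - p * p ^ n \<noteq> 0" for n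
    using qpoch_self_nonzero[OF p1] qpoch_nonzero_factor[OF qpoch_self_nonzero[OF p1]] by auto
  have last: "qpoch p p (Suc N) = qpoch p p N * (1 - p ^ Suc N)" by (simp add: qpoch_Suc)
  consider "k = 0" | "k = Suc N" | j r where "k = Suc j" "N = Suc j + r"
    using k by (metis add_Suc le_Suc_eq le_add_diff_inverse not0_implies_Suc)
  then show ?thesis
  proof cases
    case 3
    have "(1 - p ^ Suc N) / (qpoch p p k * qpoch p p (Suc N - k))
        = (1 - p * p ^ j * (p * p ^ r)) / (qpoch p p j * (1 - p * p ^ j) * (qpoch p p r * (1 - p * p ^ r)))"
      using 3 by (simp add: Suc_diff_le qpoch_Suc power_add mult_ac)
    also have "\<dots> = p * p ^ j / (qpoch p p j * (1 - p * p ^ j) * qpoch p p r)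
          + 1 / (qpoch p p j * (qpoch p p r * (1 - p * p ^ r)))"
      using nz by (intro pascal_fraction_identity)
    also have "\<dots> = p ^ k / (qpoch p p k * qpoch p p (N - k))
          + 1 / (qpoch p p (k - 1) * qpoch p p (N - (k - 1)))"
      using 3 by (simp add: Suc_diff_le qpoch_Suc)
    finally show ?thesis using 3 by simp
  qed (use nz last in simp_all)
qed

definition qbinomial_sum :: "complex \<Rightarrow> nat \<Rightarrow> complex \<Rightarrow> complex" where
  "qbinomial_sum q N z =
    (\<Sum>k\<le>N. (-1)^k * q^(k*(k-1)) * z^k / (qpoch (q\<^sup>2) (q\<^sup>2) k * qpoch (q\<^sup>2) (q\<^sup>2) (N-k)))"

lemma qbinomial_sum_Suc:
  fixes q z :: complex
  assumes q1: "norm q < 1"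
  shows "(1 - (q\<^sup>2) ^ Suc N) * qbinomial_sum q (Suc N) z = (1 - z) * qbinomial_sum q N (q\<^sup>2 * z)"
proof -
  define p where "p = q\<^sup>2"
  have p1: "norm p < 1" unfolding p_def using q1 by (simp add: norm_power power_less_one_iff)
  define t where "t k = (-1)^k * q^(k*(k-1))" for k :: nat
  have t_Suc: "t (Suc j) = - (t j * p ^ j)" for j
  proof -
    have "Suc j * (Suc j - 1) = j * (j - 1) + 2 * j" by (cases j) auto
    then show ?thesis
      unfolding t_def p_def by (simp add: power_add power_mult power2_eq_square power_mult_distrib)
  qed
  define S where "S w = (\<Sum>k\<le>N. t k * w^k / (qpoch p p k * qpoch p p (N-k)))" for w
  have "(1 - p ^ Suc N) * (\<Sum>k\<le>Suc N. t k * z^k / (qpoch p p k * qpoch p p (Suc N - k)))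
      = (\<Sum>k\<le>Suc N. t k * z^k * (if k \<le> N then p^k / (qpoch p p k * qpoch p p (N - k)) else 0))
      + (\<Sum>k\<le>Suc N. t k * z^k * (if k = 0 then 0 else 1 / (qpoch p p (k - 1) * qpoch p p (N - (k - 1)))))"
    unfolding sum_distrib_left sum.distrib[symmetric]
  proof (intro sum.cong refl)
    fix k assume "k \<in> {..Suc N}"
    then have k: "k \<le> Suc N" by simp
    have "(1 - p ^ Suc N) * (t k * z^k / (qpoch p p k * qpoch p p (Suc N - k)))
        = t k * z^k * ((1 - p ^ Suc N) / (qpoch p p k * qpoch p p (Suc N - k)))"
      by simp
    then show "(1 - p ^ Suc N) * (t k * z^k / (qpoch p p k * qpoch p p (Suc N - k)))
        = t k * z^k * (if k \<le> N then p^k / (qpoch p p k * qpoch p p (N - k)) else 0)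
        + t k * z^k * (if k = 0 then 0 else 1 / (qpoch p p (k - 1) * qpoch p p (N - (k - 1))))"
      unfolding qbinomial_pascal[OF p1 k] distrib_left .
  qed
  also have "(\<Sum>k\<le>Suc N. t k * z^k * (if k \<le> N then p^k / (qpoch p p k * qpoch p p (N - k)) else 0))
      = S (p*z)"
    unfolding S_def by (simp add: power_mult_distrib mult_ac)
  also have "(\<Sum>k\<le>Suc N. t k * z^k * (if k = 0 then 0 else 1 / (qpoch p p (k - 1) * qpoch p p (N - (k - 1)))))
      = - z * S (p*z)"
    unfolding sum.atMost_Suc_shift S_def t_Suc by (simp add: sum_distrib_left power_mult_distrib mult_ac)
  finally show ?thesis
    unfolding qbinomial_sum_def S_def t_def p_def by (simp add: algebra_simps)
qed

lemma qbinomial_theorem: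
  fixes q z :: complex
  assumes q1: "norm q < 1"
  shows "qbinomial_sum q N z = qpoch z (q\<^sup>2) N / qpoch (q\<^sup>2) (q\<^sup>2) N"
proof (induction N arbitrary: z)
  case (Suc N)
  define p where "p = q\<^sup>2"
  have p1: "norm p < 1" unfolding p_def using q1 by (simp add: norm_power power_less_one_iff)
  have nz: "qpoch p p N \<noteq> 0" "1 - p ^ Suc N \<noteq> 0"
    by (rule qpoch_self_nonzero[OF p1], rule one_minus_power_nonzero[OF p1], simp)
  have "(1 - p ^ Suc N) * qbinomial_sum q (Suc N) z = (1 - z) * (qpoch (p*z) p N / qpoch p p N)"
    using qbinomial_sum_Suc[OF q1, of N z] Suc.IH[of "p*z"] by (simp add: p_def)
  also have "\<dots> = (1 - p ^ Suc N) * (qpoch z p (Suc N) / qpoch p p (Suc N))"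
  proof -
    have "qpoch z p (Suc N) = (1 - z) * qpoch (p*z) p N" by (simp add: qpoch_Suc_left mult.commute)
    moreover have "qpoch p p (Suc N) = qpoch p p N * (1 - p ^ Suc N)" by (simp add: qpoch_Suc)
    ultimately show ?thesis using nz by (simp del: power_Suc)
  qed
  finally show ?case using mult_left_cancel[OF nz(2)] unfolding p_def by blast
qed (simp add: qbinomial_sum_def)

lemma sum_atMost_double_fold:
  fixes h :: "nat \<Rightarrow> 'a::comm_monoid_add"
  shows "(\<Sum>k\<le>2*n. h k) = (\<Sum>m\<le>n. if m = 0 then h n else h (n+m) + h (n-m))"
proof (induction n arbitrary: h)
  case (Suc n)
  have "2 * Suc n = Suc (Suc (2*n))" by simp
  then have "(\<Sum>k\<le>2 * Suc n. h k) = (\<Sum>k\<le>Suc (2*n). h k) + h (Suc (Suc (2*n)))" by simp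
  also have "(\<Sum>k\<le>Suc (2*n). h k) = h 0 + (\<Sum>k\<le>2*n. h (Suc k))"
    by (rule sum.atMost_Suc_shift)
  also have "(\<Sum>k\<le>2*n. h (Suc k))
      = (\<Sum>m\<le>n. if m = 0 then h (Suc n) else h (Suc (n + m)) + h (Suc (n - m)))"
    using Suc.IH[of "\<lambda>k. h (Suc k)"] by simp
  also have "\<dots> = (\<Sum>m\<le>n. if m = 0 then h (Suc n) else h (Suc n + m) + h (Suc n - m))"
    by (intro sum.cong refl) (auto simp: Suc_diff_le)
  finally show ?case by (simp add: algebra_simps mult_2_right)
qed simp

lemma sum_int_symmetric_fold:
  fixes f :: "int \<Rightarrow> 'a::comm_monoid_add"
  shows "(\<Sum>j\<in>{-int n..int n}. f j) = (\<Sum>m\<le>n. if m = 0 then f 0 else f (int m) + f (- int m))"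
proof (induction n)
  case (Suc n)
  have "{-int (Suc n)..int (Suc n)} = insert (int (Suc n)) (insert (- int (Suc n)) {-int n..int n})"
    by auto
  then have "(\<Sum>j\<in>{-int (Suc n)..int (Suc n)}. f j)
      = f (int (Suc n)) + (f (- int (Suc n)) + (\<Sum>j\<in>{-int n..int n}. f j))"
    by simp
  with Suc.IH show ?case by (simp add: ac_simps)
qed simp

lemma qpoch_reflect_square:
  fixes q :: complex
  assumes q0: "q \<noteq> 0"
  shows "qpoch (q / q^(2*n)) (q\<^sup>2) (2*n) * q^(n\<^sup>2) = (-1)^n * (qpoch q (q\<^sup>2) n)\<^sup>2"
proof (induction n)
  case (Suc n)
  define x where "x = q / q^(2*n)"
  have shift: "qpoch (q / q^(2 * Suc n)) (q\<^sup>2) (2 * Suc n)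
      = (1 - x/q\<^sup>2) * qpoch x (q\<^sup>2) (2*n) * (1 - q^(2*n+1))"
  proof -
    have two: "2 * Suc n = Suc (Suc (2*n))" by simp
    have "q / q ^ Suc (Suc (2*n)) = x / q\<^sup>2"
      unfolding x_def using q0 by (simp add: field_simps power2_eq_square)
    then have "qpoch (q / q^(2 * Suc n)) (q\<^sup>2) (2 * Suc n)
        = (1 - x/q\<^sup>2) * qpoch (x / q\<^sup>2 * q\<^sup>2) (q\<^sup>2) (Suc (2*n))"
      unfolding two by (simp only: qpoch_Suc_left[of _ _ "Suc (2*n)"])
    also have "x / q\<^sup>2 * q\<^sup>2 = x" using q0 by simp
    also have "qpoch x (q\<^sup>2) (Suc (2*n)) = qpoch x (q\<^sup>2) (2*n) * (1 - x * (q\<^sup>2)^(2*n))"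
      by (rule qpoch_Suc)
    also have "x * (q\<^sup>2)^(2*n) = q^(2*n+1)"
      unfolding x_def using q0 by (simp add: power2_eq_square power_mult_distrib)
    finally show ?thesis by (simp only: mult.assoc)
  qed
  have square: "q^((Suc n)\<^sup>2) = q^(n\<^sup>2) * q^(2*n+1)"
  proof -
    have "(Suc n)\<^sup>2 = n\<^sup>2 + (2*n+1)" by (simp add: power2_eq_square)
    then show ?thesis by (simp only: power_add)
  qed
  have "qpoch (q / q^(2 * Suc n)) (q\<^sup>2) (2 * Suc n) * q^((Suc n)\<^sup>2)
      = (qpoch x (q\<^sup>2) (2*n) * q^(n\<^sup>2)) * ((1 - x/q\<^sup>2) * q^(2*n+1)) * (1 - q^(2*n+1))"
    unfolding shift square by (simp add: mult_ac)
  also have "(1 - x/q\<^sup>2) * q^(2*n+1) = -(1 - q^(2*n+1))"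
    unfolding x_def using q0 by (simp add: field_simps power_add power2_eq_square)
  also have "qpoch x (q\<^sup>2) (2*n) * q^(n\<^sup>2) = (-1)^n * (qpoch q (q\<^sup>2) n)\<^sup>2"
    unfolding x_def by (rule Suc.IH)
  also have "(-1)^n * (qpoch q (q\<^sup>2) n)\<^sup>2 * (-(1 - q^(2*n+1))) * (1 - q^(2*n+1))
      = (-1)^(Suc n) * (qpoch q (q\<^sup>2) n * (1 - q^(2*n+1)))\<^sup>2"
    by (simp add: power2_eq_square algebra_simps)
  also have "qpoch q (q\<^sup>2) n * (1 - q^(2*n+1)) = qpoch q (q\<^sup>2) (Suc n)"
    by (simp add: qpoch_Suc power_mult[symmetric])
  finally show ?case .
qed simp

lemma qpoch_even_odd:
  fixes q :: complex
  shows "qpoch (-q) q (2*n) * qpoch (q\<^sup>2) (q\<^sup>2) n * qpoch q (q\<^sup>2) n = qpoch (q\<^sup>2) (q\<^sup>2) (2*n)"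
proof (induction n)
  case (Suc n)
  define r where "r = q^n"
  have dbl: "q^(2*k) = q^k * q^k" "(q\<^sup>2)^k = q^k * q^k" for k
    by (simp_all add: mult_2 power_add power2_eq_square power_mult_distrib)
  have two: "2 * Suc n = Suc (Suc (2*n))" by simp
  have "qpoch (-q) q (2 * Suc n) * qpoch (q\<^sup>2) (q\<^sup>2) (Suc n) * qpoch q (q\<^sup>2) (Suc n)
      = (qpoch (-q) q (2*n) * qpoch (q\<^sup>2) (q\<^sup>2) n * qpoch q (q\<^sup>2) n)
        * ((1 + q*(r*r)) * (1 + q*(q*(r*r))) * (1 - q\<^sup>2*(r*r)) * (1 - q*(r*r)))"
    unfolding two r_def by (simp only: qpoch_Suc dbl power_Suc) (simp add: mult_ac)
  also have "\<dots> = qpoch (q\<^sup>2) (q\<^sup>2) (2*n)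
      * ((1 - q\<^sup>2*(r*r*(r*r))) * (1 - q\<^sup>2*(q\<^sup>2*(r*r*(r*r)))))"
    unfolding Suc.IH by (simp add: algebra_simps power2_eq_square)
  also have "\<dots> = qpoch (q\<^sup>2) (q\<^sup>2) (2 * Suc n)"
    unfolding two r_def by (simp only: qpoch_Suc dbl power_Suc mult.assoc)
  finally show ?case .
qed simp

definition theta_coeff :: "complex \<Rightarrow> nat \<Rightarrow> complex" where
  "theta_coeff q m = (if m = 0 then 1 else 2) * (-1)^m * q^(m\<^sup>2)"

lemma sum_theta_coeff:
  "(\<Sum>j\<in>{-int n..int n}. (-1) powi j * q powi (j\<^sup>2)) = (\<Sum>m\<le>n. theta_coeff q m)"
proof -
  have sign: "(-1::complex) powi (- int m) = (-1)^m" for m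
    by (simp add: power_int_minus flip: power_inverse)
  have square: "q powi ((int m)\<^sup>2) = q^(m\<^sup>2)" "q powi ((- int m)\<^sup>2) = q^(m\<^sup>2)" for m
    by (metis of_nat_power power_int_of_nat power2_minus)+
  show ?thesis
    unfolding sum_int_symmetric_fold
    by (intro sum.cong refl) (simp add: sign square theta_coeff_def)
qed

lemma norm_theta_coeff_le:
  assumes "norm q < 1"
  shows "norm (theta_coeff q m) \<le> 2 * norm q ^ m"
proof -
  have "norm (theta_coeff q m) \<le> 2 * norm q ^ (m\<^sup>2)"
    by (simp add: theta_coeff_def norm_mult norm_power)
  also have "norm q ^ (m\<^sup>2) \<le> norm q ^ m"
    using assms by (intro power_decreasing) (auto simp: power2_eq_square)
  finally show ?thesis by simp
qed

lemma norm_theta_coeff_le_2: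
  assumes "norm q < 1"
  shows "norm (theta_coeff q m) \<le> 2"
proof -
  have "2 * norm q ^ m \<le> 2 * 1" using assms by (intro mult_left_mono power_le_one) auto
  then show ?thesis using norm_theta_coeff_le[OF assms, of m] by simp
qed

lemma summable_theta_coeff:
  assumes "norm q < 1"
  shows "summable (theta_coeff q)"
  using assms norm_theta_coeff_le by (intro summable_if_geometric_bound[where r = q]) auto

lemma qbinomial_term_reflect:
  fixes q :: complex
  assumes q0: "q \<noteq> 0" and k: "k = n + m \<or> n = k + m"
  shows "(-1)^k * q^(k*(k-1)) * (q/q^(2*n))^k * q^(n\<^sup>2) = (-1)^(n+m) * q^(m\<^sup>2)"
proof -
  have sign: "(-1::complex)^k = (-1)^(n+m)"
    using k by (auto simp: minus_one_power_iff)
  have "k*(k-1) + k = k*k" by (cases k) auto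
  then have tri: "q^(k*(k-1)) * q^k = q^(k*k)" by (metis power_add)
  have "k*k + n*n = m*m + 2*n*k" using k by (auto simp: algebra_simps)
  then have sq: "q^(k*k) * q^(n*n) = q^(m*m) * (q^(2*n))^k" by (metis power_add power_mult)
  have "(-1)^k * q^(k*(k-1)) * (q/q^(2*n))^k * q^(n\<^sup>2)
      = (-1)^(n+m) * ((q^(k*(k-1)) * q^k) * q^(n*n)) / (q^(2*n))^k"
    by (simp add: sign power_divide power2_eq_square)
  also have "\<dots> = (-1)^(n+m) * q^(m\<^sup>2)"
    unfolding tri sq using q0 by (simp add: power2_eq_square)
  finally show ?thesis .
qed

lemma qbinomial_sum_reflect:
  fixes q :: complex
  assumes q0: "q \<noteq> 0"
  shows "qbinomial_sum q (2*n) (q / q^(2*n)) * q^(n\<^sup>2)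
    = (-1)^n * (\<Sum>m\<le>n. theta_coeff q m / (qpoch (q\<^sup>2) (q\<^sup>2) (n-m) * qpoch (q\<^sup>2) (q\<^sup>2) (n+m)))"
proof -
  define P where "P = qpoch (q\<^sup>2) (q\<^sup>2)"
  define h where "h k = (-1)^k * q^(k*(k-1)) * (q / q^(2*n))^k / (P k * P (2*n-k))" for k
  have h_reflect: "h k * q^(n\<^sup>2) = (-1)^(n+m) * q^(m\<^sup>2) / (P (n-m) * P (n+m))"
    if "m \<le> n" "k = n+m \<or> k = n-m" for k m
  proof -
    have "P k * P (2*n-k) = P (n-m) * P (n+m)"
      using that by (auto simp: mult.commute)
    moreover have "k = n + m \<or> n = k + m" using that by auto
    ultimately show ?thesis
      unfolding h_def using qbinomial_term_reflect[OF q0] by (simp add: mult_ac)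
  qed
  have "qbinomial_sum q (2*n) (q / q^(2*n)) * q^(n\<^sup>2)
      = (\<Sum>m\<le>n. (if m = 0 then h n else h (n+m) + h (n-m)) * q^(n\<^sup>2))"
    unfolding qbinomial_sum_def P_def[symmetric] h_def[symmetric] sum_atMost_double_fold
      sum_distrib_right ..
  also have "\<dots> = (-1)^n * (\<Sum>m\<le>n. theta_coeff q m / (P (n-m) * P (n+m)))"
    unfolding sum_distrib_left
  proof (intro sum.cong refl)
    fix m assume "m \<in> {..n}"
    then show "(if m = 0 then h n else h (n+m) + h (n-m)) * q^(n\<^sup>2)
        = (-1)^n * (theta_coeff q m / (P (n-m) * P (n+m)))"
      using h_reflect[of m] h_reflect[of 0 n]
      by (auto simp: theta_coeff_def distrib_right power_add)
  qed
  finally show ?thesis unfolding P_def .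
qed

lemma bailey_pair_beta:
  fixes q :: complex
  assumes q1: "norm q < 1" and q0: "q \<noteq> 0"
  shows "qpoch q (q\<^sup>2) n / (qpoch (-q) q (2*n) * qpoch (q\<^sup>2) (q\<^sup>2) n)
     = (\<Sum>m\<le>n. theta_coeff q m / (qpoch (q\<^sup>2) (q\<^sup>2) (n-m) * qpoch (q\<^sup>2) (q\<^sup>2) (n+m)))"
    (is "_ = ?R")
proof -
  define p where "p = q\<^sup>2"
  have p1: "norm p < 1" unfolding p_def using q1 by (simp add: norm_power power_less_one_iff)
  have P0: "qpoch p p k \<noteq> 0" for k by (rule qpoch_self_nonzero[OF p1])
  have "(-1)^n * ?R = qpoch (q / q^(2*n)) p (2*n) * q^(n\<^sup>2) / qpoch p p (2*n)"
    unfolding qbinomial_sum_reflect[OF q0, symmetric] qbinomial_theorem[OF q1] p_def by simp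
  also have "qpoch (q / q^(2*n)) p (2*n) * q^(n\<^sup>2) = (-1)^n * (qpoch q p n)\<^sup>2"
    unfolding p_def by (rule qpoch_reflect_square[OF q0])
  finally have "?R = (qpoch q p n)\<^sup>2 / qpoch p p (2*n)"
    by (metis (no_types, lifting) left_minus_one_mult_self mult.assoc times_divide_eq_right)
  also have "qpoch p p (2*n) = qpoch (-q) q (2*n) * qpoch p p n * qpoch q p n"
    using qpoch_even_odd[of q n] by (simp add: p_def)
  finally show ?thesis
    using P0[of "2*n"] \<open>qpoch p p (2*n) = _\<close> P0[of n] by (simp add: p_def power2_eq_square)
qed

section \<open>The left-hand side\<close>

definition pair_ratio :: "complex \<Rightarrow> complex \<Rightarrow> complex \<Rightarrow> nat \<Rightarrow> complex" where
  "pair_ratio p a c n = qpoch (p/a) p n * qpoch (p/c) p n / (qpoch (p*a) p n * qpoch (p*c) p n)"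

text \<open>\<open>ratio_tail p a c m\<close> is the closed form of the tail
  \<open>\<Sum>\<^sub>n\<^sub>\<ge>\<^sub>m (1 - p\<^sup>2\<^sup>n\<^sup>+\<^sup>1) pair_ratio p a c n (ac/p)\<^sup>n\<close> of the left-hand side.\<close>
definition ratio_tail :: "complex \<Rightarrow> complex \<Rightarrow> complex \<Rightarrow> nat \<Rightarrow> complex" where
  "ratio_tail p a c m = pair_ratio p a c m * (a*c/p)^m * (1 - a*p^m) * (1 - c*p^m) / (1 - a*c/p)"

lemma ratio_tail_identity:
  fixes p a c x :: complex
  assumes "p \<noteq> 0" "a \<noteq> 0" "c \<noteq> 0"
  shows "(1 - a*x) * (1 - c*x) - a*c/p * (1 - p*x/a) * (1 - p*x/c) = (1 - a*c/p) * (1 - p*x*x)"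
  using assms by (simp add: field_simps)

lemma ratio_tail_diff:
  fixes p a c :: complex
  assumes p0: "p \<noteq> 0" and a0: "a \<noteq> 0" and c0: "c \<noteq> 0"
    and adef: "\<And>n. qpoch (p*a) p n \<noteq> 0" and cdef: "\<And>n. qpoch (p*c) p n \<noteq> 0"
    and y1: "a*c/p \<noteq> 1"
  shows "ratio_tail p a c n - ratio_tail p a c (Suc n) = (1 - p^(2*n+1)) * pair_ratio p a c n * (a*c/p)^n"
proof -
  define x where "x = p^n"
  define y where "y = a*c/p"
  define R where "R = pair_ratio p a c n"
  have nz: "1 - p*a*x \<noteq> 0" "1 - p*c*x \<noteq> 0" "1 - y \<noteq> 0"
    using qpoch_nonzero_factor[OF adef] qpoch_nonzero_factor[OF cdef] y1
    unfolding x_def y_def by auto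
  have D0: "ratio_tail p a c n = R * y^n * ((1 - a*x) * (1 - c*x)) / (1 - y)"
    unfolding ratio_tail_def R_def x_def y_def by (simp add: mult_ac)
  define U where "U = (1 - p*x/a) * (1 - p*x/c)"
  define V where "V = (1 - p*a*x) * (1 - p*c*x)"
  have "V \<noteq> 0" using nz unfolding V_def by simp
  have "pair_ratio p a c (Suc n) = R * U / V"
    unfolding pair_ratio_def R_def U_def V_def x_def by (simp add: qpoch_Suc mult_ac)
  then have "ratio_tail p a c (Suc n) = R * U / V * (y^n * y) * V / (1 - y)"
    unfolding ratio_tail_def V_def x_def y_def by (simp add: mult_ac)
  also have "\<dots> = R * y^n * (y * (1 - p*x/a) * (1 - p*x/c)) / (1 - y)"
    using \<open>V \<noteq> 0\<close> unfolding U_def by (simp add: mult_ac)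
  finally have D1: "ratio_tail p a c (Suc n) = R * y^n * (y * (1 - p*x/a) * (1 - p*x/c)) / (1 - y)" .
  have "ratio_tail p a c n - ratio_tail p a c (Suc n)
      = R * y^n * ((1 - a*x) * (1 - c*x) - y * (1 - p*x/a) * (1 - p*x/c)) / (1 - y)"
    unfolding D0 D1 by (simp add: diff_divide_distrib right_diff_distrib)
  also have "(1 - a*x) * (1 - c*x) - y * (1 - p*x/a) * (1 - p*x/c) = (1 - y) * (1 - p*x*x)"
    unfolding y_def by (rule ratio_tail_identity[OF p0 a0 c0])
  also have "R * y^n * ((1 - y) * (1 - p*x*x)) / (1 - y) = R * y^n * (1 - p*x*x)"
    using nz(3) by simp
  also have "p*x*x = p^(2*n+1)" unfolding x_def by (simp add: power_add mult_2)
  finally show ?thesis unfolding R_def y_def by (simp only: mult_ac)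
qed

lemma sum_partial_sums_mult_diff:
  fixes f D :: "nat \<Rightarrow> 'a::comm_ring"
  shows "(\<Sum>n<N. (\<Sum>m\<le>n. f m) * (D n - D (Suc n))) = (\<Sum>m<N. f m * (D m - D N))"
proof (induction N)
  case (Suc N)
  have "(\<Sum>n<Suc N. (\<Sum>m\<le>n. f m) * (D n - D (Suc n)))
      = (\<Sum>m<N. f m * (D m - D N)) + (\<Sum>m\<le>N. f m) * (D N - D (Suc N))"
    using Suc.IH by simp
  also have "(\<Sum>m<N. f m * (D m - D N)) = (\<Sum>m\<le>N. f m * (D m - D N))"
    by (simp add: lessThan_Suc_atMost[symmetric])
  also have "\<dots> + (\<Sum>m\<le>N. f m) * (D N - D (Suc N)) = (\<Sum>m\<le>N. f m * (D m - D (Suc N)))"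
    unfolding sum_distrib_right sum.distrib[symmetric]
    by (intro sum.cong refl) (simp add: algebra_simps)
  finally show ?case by (simp add: lessThan_Suc_atMost)
qed simp

lemma ratio_tail_bound:
  assumes p1: "norm p < 1" and adef: "\<And>n. qpoch (p*a) p n \<noteq> 0" and cdef: "\<And>n. qpoch (p*c) p n \<noteq> 0"
  obtains K where "\<And>m. norm (ratio_tail p a c m) \<le> K * norm (a*c/p) ^ m"
proof -
  obtain da where da: "da > 0" "\<And>n. da \<le> norm (qpoch (p*a) p n)"
    using qpoch_norm_bounded_below[OF p1 adef] by blast
  obtain dc where dc: "dc > 0" "\<And>n. dc \<le> norm (qpoch (p*c) p n)"
    using qpoch_norm_bounded_below[OF p1 cdef] by blast
  define E where "E b = exp (norm (p/b) / (1 - norm p))" for b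
  have factor: "norm (1 - b*p^m) \<le> 1 + norm b" for b m
  proof -
    have "norm (b*p^m) \<le> norm b * 1"
      unfolding norm_mult norm_power using p1 by (intro mult_left_mono power_le_one) auto
    then show ?thesis using norm_triangle_ineq4[of 1 "b*p^m"] by simp
  qed
  define K where "K = E a * E c / (da * dc) * (1 + norm a) * (1 + norm c) / norm (1 - a*c/p)"
  have "norm (ratio_tail p a c m) \<le> K * norm (a*c/p) ^ m" for m
  proof -
    have "norm (pair_ratio p a c m) \<le> E a * E c / (da * dc)"
      unfolding pair_ratio_def norm_mult norm_divide E_def using da dc
      by (intro frac_le mult_mono norm_qpoch_le p1 mult_pos_pos) (auto simp: norm_divide)
    then have "norm (pair_ratio p a c m) * norm (a*c/p) ^ m * norm (1 - a*p^m) * norm (1 - c*p^m)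
        \<le> E a * E c / (da * dc) * norm (a*c/p) ^ m * (1 + norm a) * (1 + norm c)"
      using factor da dc by (intro mult_mono) (auto simp: E_def)
    then have "norm (ratio_tail p a c m)
        \<le> E a * E c / (da * dc) * norm (a*c/p) ^ m * (1 + norm a) * (1 + norm c) / norm (1 - a*c/p)"
      unfolding ratio_tail_def norm_divide norm_mult norm_power by (rule divide_right_mono) simp
    then show ?thesis by (simp add: K_def mult_ac)
  qed
  then show ?thesis by (rule that)
qed

lemma summable_theta_coeff_mult_ratio_tail:
  assumes q1: "norm q < 1" and p1: "norm p < 1" and y1: "norm (a*c/p) < 1"
    and adef: "\<And>n. qpoch (p*a) p n \<noteq> 0" and cdef: "\<And>n. qpoch (p*c) p n \<noteq> 0"
  shows "summable (\<lambda>m. theta_coeff q m * ratio_tail p a c m)"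
proof -
  obtain K where K: "\<And>m. norm (ratio_tail p a c m) \<le> K * norm (a*c/p) ^ m"
    using ratio_tail_bound[OF p1 adef cdef] by blast
  have "norm (theta_coeff q m * ratio_tail p a c m) \<le> (2 * K) * norm (a*c/p) ^ m" for m
  proof -
    show ?thesis
      unfolding norm_mult using K[of m] norm_theta_coeff_le_2[OF q1, of m]
      by (simp add: mult_mono mult.assoc)
  qed
  then show ?thesis by (rule summable_if_geometric_bound[OF y1])
qed

lemma lhs_sums:
  assumes q1: "norm q < 1" and p1: "norm p < 1" and p0: "p \<noteq> 0" and a0: "a \<noteq> 0" and c0: "c \<noteq> 0"
    and adef: "\<And>n. qpoch (p*a) p n \<noteq> 0" and cdef: "\<And>n. qpoch (p*c) p n \<noteq> 0"
    and y1: "norm (a*c/p) < 1"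
  shows "(\<lambda>n. (\<Sum>m\<le>n. theta_coeff q m) * ((1 - p^(2*n+1)) * pair_ratio p a c n * (a*c/p)^n))
     sums (\<Sum>m. theta_coeff q m * ratio_tail p a c m)"
proof -
  have "a*c/p \<noteq> 1" using y1 by auto
  have partial: "(\<Sum>n<N. (\<Sum>m\<le>n. theta_coeff q m) * ((1 - p^(2*n+1)) * pair_ratio p a c n * (a*c/p)^n))
      = (\<Sum>m<N. theta_coeff q m * ratio_tail p a c m) - (\<Sum>m<N. theta_coeff q m) * ratio_tail p a c N"
    for N
  proof -
    have "(\<Sum>n<N. (\<Sum>m\<le>n. theta_coeff q m) * ((1 - p^(2*n+1)) * pair_ratio p a c n * (a*c/p)^n))
        = (\<Sum>m<N. theta_coeff q m * (ratio_tail p a c m - ratio_tail p a c N))"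
      unfolding ratio_tail_diff[OF p0 a0 c0 adef cdef \<open>a*c/p \<noteq> 1\<close>, symmetric]
      by (rule sum_partial_sums_mult_diff)
    also have "\<dots> = (\<Sum>m<N. theta_coeff q m * ratio_tail p a c m) - (\<Sum>m<N. theta_coeff q m) * ratio_tail p a c N"
      by (simp add: right_diff_distrib sum_subtractf sum_distrib_right)
    finally show ?thesis .
  qed
  obtain K where "\<And>m. norm (ratio_tail p a c m) \<le> K * norm (a*c/p) ^ m"
    using ratio_tail_bound[OF p1 adef cdef] by blast
  then have "ratio_tail p a c \<longlonglongrightarrow> 0"
    by (intro summable_LIMSEQ_zero summable_if_geometric_bound[OF y1])
  then have "(\<lambda>N. (\<Sum>m<N. theta_coeff q m * ratio_tail p a c m) - (\<Sum>m<N. theta_coeff q m) * ratio_tail p a c N)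
      \<longlonglongrightarrow> (\<Sum>m. theta_coeff q m * ratio_tail p a c m) - (\<Sum>m. theta_coeff q m) * 0"
    by (intro tendsto_intros summable_LIMSEQ summable_theta_coeff q1
        summable_theta_coeff_mult_ratio_tail p1 y1 adef cdef)
  then show ?thesis unfolding sums_def partial by simp
qed

lemma lhs_summand_eq:
  fixes q a c :: complex
  assumes "q \<noteq> 0"
  shows "(\<Sum>j\<in>{-int n..int n}.
            (-1) powi j * (1 - q ^ (4*n+2)) * q powi (j\<^sup>2 - 2 * int n)
            * qpoch (q\<^sup>2 / a) (q\<^sup>2) n * qpoch (q\<^sup>2 / c) (q\<^sup>2) n * (a*c)^n
            / (qpoch (q\<^sup>2 * a) (q\<^sup>2) n * qpoch (q\<^sup>2 * c) (q\<^sup>2) n))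
     = (\<Sum>m\<le>n. theta_coeff q m)
       * ((1 - (q\<^sup>2)^(2*n+1)) * pair_ratio (q\<^sup>2) a c n * (a*c/q\<^sup>2)^n)"
proof -
  have "q powi (j\<^sup>2 - 2 * int n) = q powi (j\<^sup>2) / q^(2*n)" for j
    using assms by (simp add: power_int_diff) (metis of_nat_mult of_nat_numeral power_int_of_nat)
  moreover have "4*n+2 = 2*(2*n+1)" by simp
  then have "q ^ (4*n+2) = (q\<^sup>2)^(2*n+1)" by (simp only: power_mult)
  moreover have "(a*c)^n / q^(2*n) = (a*c/q\<^sup>2)^n" "(q\<^sup>2)^n = q^(2*n)"
    by (simp_all add: power_divide power_mult)
  ultimately show ?thesis
    unfolding sum_theta_coeff[symmetric] sum_distrib_right pair_ratio_def
    by (intro sum.cong refl) (simp add: field_simps)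
qed

lemma lhs_eq:
  fixes q a c :: complex
  assumes q0: "q \<noteq> 0" and q1: "norm q < 1" and a0: "a \<noteq> 0" and c0: "c \<noteq> 0"
    and adef: "\<And>n. qpoch (q\<^sup>2 * a) (q\<^sup>2) n \<noteq> 0"
    and cdef: "\<And>n. qpoch (q\<^sup>2 * c) (q\<^sup>2) n \<noteq> 0"
    and y1: "norm (a*c/q\<^sup>2) < 1"
  shows "(\<Sum>n. \<Sum>j\<in>{-int n..int n}.
            (-1) powi j * (1 - q ^ (4*n+2)) * q powi (j\<^sup>2 - 2 * int n)
            * qpoch (q\<^sup>2 / a) (q\<^sup>2) n * qpoch (q\<^sup>2 / c) (q\<^sup>2) n * (a*c)^n
            / (qpoch (q\<^sup>2 * a) (q\<^sup>2) n * qpoch (q\<^sup>2 * c) (q\<^sup>2) n))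
       = (\<Sum>m. theta_coeff q m * ratio_tail (q\<^sup>2) a c m)"
proof -
  have "norm (q\<^sup>2) < 1" using q1 by (simp add: norm_power power_less_one_iff)
  from lhs_sums[OF q1 this _ a0 c0 adef cdef y1] q0 show ?thesis
    unfolding lhs_summand_eq[OF q0] by (simp add: sums_iff)
qed

section \<open>The right-hand side\<close>

lemma sum_triangle_swap:
  fixes g :: "nat \<Rightarrow> nat \<Rightarrow> 'a::comm_monoid_add"
  shows "(\<Sum>n<N. \<Sum>m\<le>n. g m (n-m)) = (\<Sum>m<N. \<Sum>k<N-m. g m k)"
proof (induction N)
  case (Suc N)
  have "(\<Sum>m<Suc N. \<Sum>k<Suc N - m. g m k) = (\<Sum>m<N. \<Sum>k<Suc N - m. g m k) + g N 0"
    by simp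
  also have "(\<Sum>m<N. \<Sum>k<Suc N - m. g m k) = (\<Sum>m<N. \<Sum>k<N - m. g m k) + (\<Sum>m<N. g m (N-m))"
    unfolding sum.distrib[symmetric] by (intro sum.cong refl) (simp add: Suc_diff_le)
  finally show ?case
    using Suc.IH by (simp add: lessThan_Suc_atMost[symmetric] add.assoc)
qed simp

lemma sums_triangle_if_dominated:
  fixes g :: "nat \<Rightarrow> nat \<Rightarrow> 'a::{real_normed_algebra,banach}"
  assumes rows: "\<And>m. g m sums s m"
    and bound: "\<And>m L. norm (\<Sum>k<L. g m k) \<le> M m" and "summable M"
  shows "summable s" and "(\<lambda>n. \<Sum>m\<le>n. g m (n-m)) sums (\<Sum>m. s m)"
proof -
  define h where "h N m = (if m \<in> {..<N} then \<Sum>k<N-m. g m k else 0)" for N m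
  have "summable (\<lambda>m. norm (s m)) \<and> (\<lambda>N. \<Sum>m. h N m) \<longlonglongrightarrow> (\<Sum>m. s m)"
  proof (rule tannerys_theorem[where M = M, THEN conjunct2])
    show "(\<lambda>N. h N m) \<longlonglongrightarrow> s m" for m
    proof (rule Lim_transform_eventually)
      show "(\<lambda>N. \<Sum>k<N-m. g m k) \<longlonglongrightarrow> s m"
        using filterlim_compose[OF rows[unfolded sums_def] filterlim_minus_const_nat_at_top[of m]]
        by (simp add: o_def)
      show "\<forall>\<^sub>F N in sequentially. (\<Sum>k<N-m. g m k) = h N m"
        unfolding h_def eventually_sequentially by (intro exI[of _ "Suc m"]) auto
    qed
    have "norm (h N m) \<le> M m" for N m
      unfolding h_def using order_trans[OF norm_ge_zero bound] bound by simp
    then show "\<forall>\<^sub>F (m, N) in sequentially \<times>\<^sub>F sequentially. norm (h N m) \<le> M m"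
      by (intro always_eventually) auto
  qed (use assms in simp_all)
  then show "summable s" by (blast intro: summable_norm_cancel)
  have "(\<Sum>m. h N m) = (\<Sum>n<N. \<Sum>m\<le>n. g m (n-m))" for N
    unfolding sum_triangle_swap h_def by (rule sums_unique[symmetric], rule sums_If_finite_set) simp
  with \<open>_ \<and> _\<close> show "(\<lambda>n. \<Sum>m\<le>n. g m (n-m)) sums (\<Sum>m. s m)" by (simp add: sums_def)
qed

lemma gauss_term_split:
  "qpoch (p/a) p (m+k) * qpoch (p/c) p (m+k) * (a*c/p)^(m+k) / (qpoch p p k * qpoch p p (k + 2*m))
    = (qpoch (p/a) p m * qpoch (p/c) p m * (a*c/p)^m) * gauss_term p a c m k"
proof -
  have "p/b * p^m = p^(m+1)/b" for b by (simp add: power_add mult_ac)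
  then show ?thesis unfolding gauss_term_def qpoch_add by (simp add: power_add mult_ac)
qed

lemma rhs_summand_triangle:
  "qpoch (p/a) p n * qpoch (p/c) p n * (a*c/p)^n
      * (\<Sum>m\<le>n. theta_coeff q m / (qpoch p p (n-m) * qpoch p p (n+m)))
    = (\<Sum>m\<le>n. theta_coeff q m * (qpoch (p/a) p m * qpoch (p/c) p m * (a*c/p)^m)
        * gauss_term p a c m (n-m))"
  unfolding sum_distrib_left
proof (intro sum.cong refl)
  define V where "V m = qpoch (p/a) p m * qpoch (p/c) p m * (a*c/p)^m" for m
  fix m assume "m \<in> {..n}"
  then obtain k where k: "n = m + k" using le_Suc_ex by auto
  then have nk: "n - m = k" "n + m = k + 2*m" by auto
  have split: "V n / (qpoch p p k * qpoch p p (k + 2*m)) = V m * gauss_term p a c m k"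
    using gauss_term_split[of p a m k c] unfolding V_def k .
  have "V n * (theta_coeff q m / (qpoch p p (n-m) * qpoch p p (n+m)))
      = theta_coeff q m * (V n / (qpoch p p k * qpoch p p (k + 2*m)))"
    unfolding nk by simp
  then show "V n * (theta_coeff q m / (qpoch p p (n-m) * qpoch p p (n+m)))
      = theta_coeff q m * V m * gauss_term p a c m (n-m)"
    unfolding split nk by (simp add: mult_ac)
qed

lemma gauss_row_partial_sum_bound:
  assumes q1: "norm q < 1" and p1: "norm p < 1" and y1: "norm (a*c/p) < 1"
  obtains B where "\<And>m L. norm (\<Sum>k<L. theta_coeff q m * (qpoch (p/a) p m * qpoch (p/c) p m * (a*c/p)^m)
      * gauss_term p a c m k) \<le> B * norm (a*c/p) ^ m"
proof -
  define y where "y = a*c/p"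
  obtain C where C: "C \<ge> 0" "\<And>m k. norm (gauss_term p a c m k) \<le> C * norm (a*c/p) ^ k"
    using gauss_term_bound[OF p1] by blast
  define E where "E b = exp (norm (p/b) / (1 - norm p))" for b
  have "norm (\<Sum>k<L. theta_coeff q m * (qpoch (p/a) p m * qpoch (p/c) p m * y^m) * gauss_term p a c m k)
      \<le> 2 * E a * E c * (C / (1 - norm y)) * norm y ^ m" for m L
  proof -
    have "norm (\<Sum>k<L. gauss_term p a c m k) \<le> (\<Sum>k. C * norm y ^ k)"
      using C y1 unfolding y_def
      by (intro order_trans[OF sum_norm_le sum_le_suminf] summable_mult summable_geometric) auto
    also have "(\<Sum>k. C * norm y ^ k) = C / (1 - norm y)"
      using y1 unfolding y_def by (simp add: suminf_mult suminf_geometric)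
    finally have row: "norm (\<Sum>k<L. gauss_term p a c m k) \<le> C / (1 - norm y)" .
    note norm_theta_coeff_le_2[OF q1, of m]
    moreover have "norm (qpoch (p/a) p m * qpoch (p/c) p m * y^m) \<le> E a * E c * norm y ^ m"
      unfolding norm_mult norm_power E_def
      by (intro mult_right_mono mult_mono norm_qpoch_le p1) auto
    ultimately have weight: "norm (theta_coeff q m * (qpoch (p/a) p m * qpoch (p/c) p m * y^m))
        \<le> 2 * (E a * E c * norm y ^ m)"
      unfolding norm_mult[of "theta_coeff q m"] by (rule mult_mono) auto
    have "norm (\<Sum>k<L. theta_coeff q m * (qpoch (p/a) p m * qpoch (p/c) p m * y^m) * gauss_term p a c m k)
        = norm (theta_coeff q m * (qpoch (p/a) p m * qpoch (p/c) p m * y^m))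
          * norm (\<Sum>k<L. gauss_term p a c m k)"
      unfolding sum_distrib_left[symmetric] norm_mult ..
    also have "\<dots> \<le> 2 * (E a * E c * norm y ^ m) * (C / (1 - norm y))"
      using weight row by (rule mult_mono) (use C(1) y1 in \<open>auto simp: y_def E_def\<close>)
    finally show ?thesis by (simp add: mult_ac)
  qed
  then show ?thesis unfolding y_def by (rule that)
qed

lemma rhs_double_sums:
  assumes q1: "norm q < 1" and p1: "norm p < 1" and y1: "norm (a*c/p) < 1"
  shows "summable (\<lambda>m. theta_coeff q m * (qpoch (p/a) p m * qpoch (p/c) p m * (a*c/p)^m)
            * gauss_sum p a c m)"
    and "(\<lambda>n. qpoch (p/a) p n * qpoch (p/c) p n * (a*c/p)^n
              * (\<Sum>m\<le>n. theta_coeff q m / (qpoch p p (n-m) * qpoch p p (n+m))))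
     sums (\<Sum>m. theta_coeff q m * (qpoch (p/a) p m * qpoch (p/c) p m * (a*c/p)^m) * gauss_sum p a c m)"
proof -
  obtain B where bound: "\<And>m L. norm (\<Sum>k<L. theta_coeff q m
      * (qpoch (p/a) p m * qpoch (p/c) p m * (a*c/p)^m) * gauss_term p a c m k) \<le> B * norm (a*c/p) ^ m"
    using gauss_row_partial_sum_bound[OF q1 p1 y1] by blast
  have summable_bound: "summable (\<lambda>m. B * norm (a*c/p) ^ m)"
    using y1 by (intro summable_mult summable_geometric) simp
  have rows: "(\<lambda>k. theta_coeff q m * (qpoch (p/a) p m * qpoch (p/c) p m * (a*c/p)^m)
      * gauss_term p a c m k)
    sums (theta_coeff q m * (qpoch (p/a) p m * qpoch (p/c) p m * (a*c/p)^m) * gauss_sum p a c m)" for m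
    unfolding gauss_sum_def using summable_gauss_term[OF p1 y1]
    by (intro sums_mult summable_sums)
  note dominated = sums_triangle_if_dominated[OF rows bound summable_bound]
  show "summable (\<lambda>m. theta_coeff q m * (qpoch (p/a) p m * qpoch (p/c) p m * (a*c/p)^m)
      * gauss_sum p a c m)"
    and "(\<lambda>n. qpoch (p/a) p n * qpoch (p/c) p n * (a*c/p)^n
              * (\<Sum>m\<le>n. theta_coeff q m / (qpoch p p (n-m) * qpoch p p (n+m))))
     sums (\<Sum>m. theta_coeff q m * (qpoch (p/a) p m * qpoch (p/c) p m * (a*c/p)^m) * gauss_sum p a c m)"
    unfolding rhs_summand_triangle by (fact dominated)+
qed

lemma gauss_prefactor:
  assumes p1: "norm p < 1" and p0: "p \<noteq> 0" and a0: "a \<noteq> 0" and c0: "c \<noteq> 0"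
    and adef: "\<And>n. qpoch (p*a) p n \<noteq> 0" and cdef: "\<And>n. qpoch (p*c) p n \<noteq> 0"
    and y1: "norm (a*c/p) < 1"
  shows "qpoch_inf p p * qpoch_inf (a*c) p / (qpoch_inf (p*a) p * qpoch_inf (p*c) p)
      * (qpoch (p/a) p m * qpoch (p/c) p m * (a*c/p)^m * gauss_sum p a c m)
    = ratio_tail p a c m"
proof -
  define y where "y = a*c/p"
  define P where "P = qpoch_inf p p"
  define Y where "Y = qpoch_inf (a*c) p"
  define Ai where "Ai = qpoch_inf (p*a*p^m) p"
  define Ci where "Ci = qpoch_inf (p*c*p^m) p"
  have split: "qpoch_inf (p*a) p = qpoch (p*a) p m * Ai" "qpoch_inf (p*c) p = qpoch (p*c) p m * Ci"
    unfolding Ai_def Ci_def by (rule qpoch_inf_split[OF p1])+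
  have shift: "qpoch_inf (a*p^m) p = (1 - a*p^m) * Ai" "qpoch_inf (c*p^m) p = (1 - c*p^m) * Ci"
    unfolding Ai_def Ci_def
    using qpoch_inf_Suc_left[OF p1, of "a*p^m"] qpoch_inf_Suc_left[OF p1, of "c*p^m"]
    by (simp_all add: mult_ac)
  have "qpoch_inf y p = (1 - y) * Y"
    using qpoch_inf_Suc_left[OF p1, of y] p0 by (simp add: y_def Y_def)
  then have gauss: "gauss_sum p a c m = (1 - a*p^m) * Ai * ((1 - c*p^m) * Ci) / (P * ((1 - y) * Y))"
    unfolding q_gauss_sum[OF p1 p0 a0 c0 y1, of m] shift P_def y_def by (simp only:)
  have "norm (a*c) < norm p" using y1 p0 by (simp add: norm_divide divide_less_eq)
  then have "Y \<noteq> 0" unfolding Y_def using p1 by (intro qpoch_inf_nonzero_if_norm_less[OF p1]) simp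
  moreover have "P \<noteq> 0" unfolding P_def by (rule qpoch_inf_nonzero_if_norm_less[OF p1 p1])
  moreover have "qpoch_inf (p*a) p \<noteq> 0" "qpoch_inf (p*c) p \<noteq> 0"
    by (intro qpoch_inf_nonzero[OF p1] qpoch_nonzero_factor adef cdef)+
  then have "Ai \<noteq> 0" "Ci \<noteq> 0" unfolding split by simp_all
  moreover have "1 - y \<noteq> 0" using y1 by (auto simp: y_def)
  moreover have "qpoch (p*a) p m \<noteq> 0" "qpoch (p*c) p m \<noteq> 0" by (fact adef cdef)+
  moreover have alg: "P * Y / (Am * Ai * (Cm * Ci)) * (A * B * Z * (Fa * Ai * (Fc * Ci) / (P * (W * Y))))
      = A * B / (Am * Cm) * Z * Fa * Fc / W"
    if "P \<noteq> 0" "Y \<noteq> 0" "Ai \<noteq> 0" "Ci \<noteq> 0" "W \<noteq> 0" "Am \<noteq> 0" "Cm \<noteq> 0"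
    for P Y Am Ai Cm Ci A B Z Fa Fc W :: complex
    using that by (simp add: field_simps)
  ultimately show ?thesis
    unfolding gauss split ratio_tail_def pair_ratio_def P_def[symmetric] Y_def[symmetric]
      y_def[symmetric]
    by (intro alg)
qed

lemma rhs_eq:
  fixes q a c :: complex
  assumes q0: "q \<noteq> 0" and q1: "norm q < 1" and a0: "a \<noteq> 0" and c0: "c \<noteq> 0"
    and adef: "\<And>n. qpoch (q\<^sup>2 * a) (q\<^sup>2) n \<noteq> 0"
    and cdef: "\<And>n. qpoch (q\<^sup>2 * c) (q\<^sup>2) n \<noteq> 0"
    and y1: "norm (a*c/q\<^sup>2) < 1"
  shows "qpoch_inf (q\<^sup>2) (q\<^sup>2) * qpoch_inf (a*c) (q\<^sup>2)
           / (qpoch_inf (q\<^sup>2 * a) (q\<^sup>2) * qpoch_inf (q\<^sup>2 * c) (q\<^sup>2))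
         * (\<Sum>n. qpoch (q\<^sup>2 / a) (q\<^sup>2) n * qpoch (q\<^sup>2 / c) (q\<^sup>2) n * qpoch q (q\<^sup>2) n
               / (qpoch (-q) q (2*n) * qpoch (q\<^sup>2) (q\<^sup>2) n) * (a*c / q\<^sup>2)^n)
       = (\<Sum>m. theta_coeff q m * ratio_tail (q\<^sup>2) a c m)"
proof -
  define p where "p = q\<^sup>2"
  have p1: "norm p < 1" unfolding p_def using q1 by (simp add: norm_power power_less_one_iff)
  have p0: "p \<noteq> 0" unfolding p_def using q0 by simp
  define F where "F = qpoch_inf p p * qpoch_inf (a*c) p / (qpoch_inf (p*a) p * qpoch_inf (p*c) p)"
  define V where "V m = qpoch (p/a) p m * qpoch (p/c) p m * (a*c/p)^m" for m
  have "(\<Sum>n. qpoch (p/a) p n * qpoch (p/c) p n * qpoch q p n / (qpoch (-q) q (2*n) * qpoch p p n)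
          * (a*c/p)^n)
      = (\<Sum>m. theta_coeff q m * V m * gauss_sum p a c m)"
    using rhs_double_sums(2)[OF q1 p1 y1[folded p_def]]
    unfolding V_def p_def bailey_pair_beta[OF q1 q0, symmetric] by (simp add: sums_iff mult_ac)
  then have "F * (\<Sum>n. qpoch (p/a) p n * qpoch (p/c) p n * qpoch q p n
               / (qpoch (-q) q (2*n) * qpoch p p n) * (a*c/p)^n)
      = (\<Sum>m. theta_coeff q m * (F * (V m * gauss_sum p a c m)))"
    using suminf_mult[OF rhs_double_sums(1)[OF q1 p1 y1[folded p_def]], of F]
    by (simp add: V_def mult_ac)
  also have "\<dots> = (\<Sum>m. theta_coeff q m * ratio_tail p a c m)"
    unfolding F_def V_def
    using gauss_prefactor[OF p1 p0 a0 c0 adef[folded p_def] cdef[folded p_def] y1[folded p_def]]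
    by simp
  finally show ?thesis unfolding F_def p_def .
qed

theorem theorem8p5:
  fixes q a c :: complex
  assumes q0: "q \<noteq> 0" and q1: "norm q < 1"
    and a0: "a \<noteq> 0" and c0: "c \<noteq> 0"
    and adef: "\<And>n. qpoch (q^2 * a) (q^2) n \<noteq> 0"
    and cdef: "\<And>n. qpoch (q^2 * c) (q^2) n \<noteq> 0"
    and conv: "norm (a * c) < norm (q^2)"
  shows "(\<Sum>n. \<Sum>j\<in>{-int n..int n}.
            (-1) powi j * (1 - q ^ (4*n+2)) * q powi (j^2 - 2 * int n)
            * qpoch (q^2 / a) (q^2) n * qpoch (q^2 / c) (q^2) n * (a*c)^n
            / (qpoch (q^2 * a) (q^2) n * qpoch (q^2 * c) (q^2) n))
       = qpoch_inf (q^2) (q^2) * qpoch_inf (a*c) (q^2)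
           / (qpoch_inf (q^2 * a) (q^2) * qpoch_inf (q^2 * c) (q^2))
         * (\<Sum>n. qpoch (q^2 / a) (q^2) n * qpoch (q^2 / c) (q^2) n * qpoch q (q^2) n
               / (qpoch (-q) q (2*n) * qpoch (q^2) (q^2) n) * (a*c / q^2)^n)"
proof -
  have y1: "norm (a*c/q\<^sup>2) < 1"
    using conv q0 by (simp add: norm_divide divide_less_eq)
  show ?thesis
    unfolding lhs_eq[OF q0 q1 a0 c0 adef cdef y1] rhs_eq[OF q0 q1 a0 c0 adef cdef y1] ..
qed

end
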